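(* Let $N=\prod_{i=1}^\ell p_i^{r_i}$ be a positive integer, where $p_1,\dots,p_\ell$ are distinct primes and $r_1,\dots,r_\ell\ge 1$. Let $\mu\ge 1$ and let $f\in\mathbb{Z}[X_1,\dots,X_\mu]$ be any $\mu$-linear polynomial that is co-prime to $N$. Then for every integer $m>1$, if $\mathbf{x}=(x_1,\dots,x_\mu)$ is sampled uniformly from $\{0,1,\dots,m-1\}^\mu$, $$\Pr_{\mathbf{x}}\big[f(\mathbf{x})\equiv 0 \pmod N\big]\;\le\;\frac{\mu}{m}+\prod_{i=1}^{\ell} I_{1/p_i}(r_i,\mu).$$
   Context: A polynomial $f\in\mathbb{Z}[X_1,\dots,X_\mu]$ is $\mu$-linear (multilinear) if it has degree at most $1$ in each variable $X_i$. $f$ is co-prime to $N$ if the greatest common divisor of $N$ and all coefficients of $f$ equals $1$. For $\epsilon\in(0,1)$ and integers $k\ge 0$, $\mu\ge 1$, the regularized (incomplete) beta function is $I_\epsilon(k,\mu)=(1-\epsilon)^\mu\sum_{j=k}^{\infty}\binom{\mu+j-1}{j}\epsilon^j$; equivalently, it is the probability that $Z_1+\dots+Z_\mu\ge k$, where $Z_1,\dots,Z_\mu$ are i.i.d. nonnegative-integer random variables with $\Pr[Z_i\ge s]=\epsilon^s$ for all $s\ge 0$. *)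

theory Defs
  imports "HOL-Analysis.Analysis" "HOL-Computational_Algebra.Primes"
begin

text \<open>A mu-linear polynomial in Z[X_0,...,X_(mu-1)] is given by its coefficient
  function c on subsets S of {..<mu}: f(x) = sum over S of c S * prod_{i in S} x i.\<close>
definition mlin_eval :: "nat \<Rightarrow> (nat set \<Rightarrow> int) \<Rightarrow> (nat \<Rightarrow> int) \<Rightarrow> int" where
  "mlin_eval \<mu> c x = (\<Sum>S\<in>Pow {..<\<mu>}. c S * (\<Prod>i\<in>S. x i))"

definition mlin_coprime :: "nat \<Rightarrow> (nat set \<Rightarrow> int) \<Rightarrow> int \<Rightarrow> bool" where
  "mlin_coprime \<mu> c N \<longleftrightarrow> Gcd (insert N (c ` Pow {..<\<mu>})) = 1"

definition inc_beta :: "real \<Rightarrow> nat \<Rightarrow> nat \<Rightarrow> real" where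
  "inc_beta \<epsilon> k \<mu> = (1 - \<epsilon>) ^ \<mu> *
     (\<Sum>j. if k \<le> j then real ((\<mu> + j - 1) choose j) * \<epsilon> ^ j else 0)"

end

theory Submission
  imports Defs
begin

text \<open>
  Induct on the number of variables, for a whole family of multilinear polynomials that must
  vanish simultaneously modulo \<open>N = \<Prod>p. p^r_p\<close>. Write each member as \<open>x_n * a + b\<close>, with
  \<open>a\<close>, \<open>b\<close> depending on the other variables only. Once these are fixed, all solutions
  \<open>x_n < m\<close> lie in one residue class modulo \<open>\<Prod>p. p^(r_p - d_p)\<close>, where \<open>p^d_p\<close> is the largest
  power of \<open>p\<close> (capped at \<open>r_p\<close>) dividing all the \<open>a\<close>'s and \<open>b\<close>'s; hence there are at most
  \<open>1 + m * \<Prod>p. p^-(r_p - d_p)\<close> of them. Here \<open>p^-(r - d)\<close> is the probability that \<open>p^(r - Z)\<close>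
  divides all \<open>a\<close>'s and \<open>b\<close>'s, where \<open>Z = min(Z', r)\<close> and \<open>Pr[Z' \<ge> s] = p^-s\<close>. Summing over
  the other variables thus bounds the count by an average, over independent such \<open>Z_p\<close>, of
  counts for the family of all \<open>a\<close>'s and \<open>b\<close>'s modulo \<open>\<Prod>p. p^(r_p - Z_p)\<close>, with one variable
  fewer. Keeping track of how much \<open>p\<close>-content this new family may have, the induction produces
  the negative binomial tail \<open>Pr[Z_1 + \<dots> + Z_\<mu> \<ge> r_p] = I_(1/p)(r_p, \<mu>)\<close>, while each variable
  contributes one term \<open>1/m\<close>.
\<close>

text \<open>\<open>capped_geom e r\<close> is the distribution of \<open>min(Z, r)\<close> and \<open>neg_binomial e n\<close> that of
  \<open>Z_1 + \<dots> + Z_n\<close>, for independent \<open>Z, Z_i\<close> with \<open>Pr[Z \<ge> s] = e^s\<close>; truncated subtraction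
  makes \<open>neg_binomial e 0\<close> the point mass at \<open>0\<close>.\<close>

definition capped_geom :: "real \<Rightarrow> nat \<Rightarrow> nat \<Rightarrow> real" where
  "capped_geom e r s = (if s < r then (1 - e) * e ^ s else e ^ r)"

definition neg_binomial :: "real \<Rightarrow> nat \<Rightarrow> nat \<Rightarrow> real" where
  "neg_binomial e n j = real ((n + j - 1) choose j) * (1 - e) ^ n * e ^ j"

definition neg_binomial_tail :: "real \<Rightarrow> nat \<Rightarrow> nat \<Rightarrow> real" where
  "neg_binomial_tail e n k = 1 - (\<Sum>j<k. neg_binomial e n j)"

lemma capped_geom_nonneg: "0 \<le> e \<Longrightarrow> e \<le> 1 \<Longrightarrow> 0 \<le> capped_geom e r s"
  by (simp add: capped_geom_def)

lemma sum_geom_diff: "k \<le> r \<Longrightarrow> (\<Sum>s\<in>{k..<r}. (1 - e) * e ^ s) = e ^ k - (e::real) ^ r"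
  by (induction r rule: dec_induct) (simp_all add: algebra_simps)

lemma sum_capped_geom_tail:
  assumes "k \<le> r"
  shows "(\<Sum>s\<in>{k..r}. capped_geom e r s) = e ^ k"
proof -
  have "(\<Sum>s\<in>{k..r}. capped_geom e r s) = capped_geom e r r + (\<Sum>s\<in>{k..<r}. capped_geom e r s)"
    using assms by (simp add: atLeastLessThanSuc_atLeastAtMost[symmetric])
  also have "(\<Sum>s\<in>{k..<r}. capped_geom e r s) = (\<Sum>s\<in>{k..<r}. (1 - e) * e ^ s)"
    by (intro sum.cong) (auto simp: capped_geom_def)
  finally show ?thesis
    using sum_geom_diff[OF assms, of e] by (simp add: capped_geom_def)
qed

lemma sum_capped_geom: "(\<Sum>s\<le>r. capped_geom e r s) = 1"
  using sum_capped_geom_tail[of 0 r e] by (simp add: atLeast0AtMost)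

lemma sum_capped_geom_indicator:
  assumes "d \<le> r"
  shows "(\<Sum>s\<le>r. capped_geom e r s * (if r - s \<le> d then 1 else 0)) = e ^ (r - d)"
proof -
  have "(\<Sum>s\<le>r. capped_geom e r s * (if r - s \<le> d then 1 else 0))
      = (\<Sum>s\<le>r. if r - s \<le> d then capped_geom e r s else 0)"
    by (intro sum.cong) auto
  also have "\<dots> = (\<Sum>s\<in>{s\<in>{..r}. r - s \<le> d}. capped_geom e r s)"
    by (rule sum.inter_filter[symmetric]) simp
  also have "{s\<in>{..r}. r - s \<le> d} = {r - d..r}"
    using assms by auto
  finally show ?thesis
    using sum_capped_geom_tail[of "r - d" r e] by simp
qed

lemma neg_binomial_0: "neg_binomial e 0 j = (if j = 0 then 1 else 0)"
  by (cases j) (simp_all add: neg_binomial_def)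

lemma neg_binomial_convolution:
  "(\<Sum>s\<le>j. (1 - e) * e ^ s * neg_binomial e n (j - s)) = neg_binomial e (Suc n) j"
proof (cases "n = 0")
  case True
  have "(\<Sum>s\<le>j. (1 - e) * e ^ s * neg_binomial e 0 (j - s)) = (\<Sum>s\<le>j. if s = j then (1 - e) * e ^ s else 0)"
    by (intro sum.cong) (auto simp: neg_binomial_0)
  then show ?thesis
    using True by (simp add: neg_binomial_def mult_ac)
next
  case False
  have "(\<Sum>s\<le>j. (1 - e) * e ^ s * neg_binomial e n (j - s))
      = (\<Sum>s\<le>j. (1 - e) ^ Suc n * e ^ j * real ((n - 1 + (j - s)) choose (j - s)))"
  proof (intro sum.cong refl)
    fix s assume "s \<in> {..j}"
    then have ej: "e ^ s * e ^ (j - s) = e ^ j"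
      by (simp flip: power_add)
    have "n + (j - s) - 1 = n - 1 + (j - s)"
      using False by simp
    then show "(1 - e) * e ^ s * neg_binomial e n (j - s)
        = (1 - e) ^ Suc n * e ^ j * real ((n - 1 + (j - s)) choose (j - s))"
      unfolding neg_binomial_def ej[symmetric] by (simp only: power_Suc mult_ac)
  qed
  also have "\<dots> = (1 - e) ^ Suc n * e ^ j * (\<Sum>s\<le>j. real ((n - 1 + s) choose s))"
    unfolding sum_distrib_left[symmetric] atLeast0AtMost[symmetric]
    by (subst sum.atLeastAtMost_rev) simp
  also have "(\<Sum>s\<le>j. real ((n - 1 + s) choose s)) = real ((n + j) choose j)"
    using sum_choose_lower[of "n - 1" j] False by (simp flip: of_nat_sum)
  finally show ?thesis
    by (simp add: neg_binomial_def)
qed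

lemma neg_binomial_tail_0 [simp]: "neg_binomial_tail e n 0 = 1"
  by (simp add: neg_binomial_tail_def)

lemma neg_binomial_cdf_Suc:
  "(\<Sum>j<k. neg_binomial e (Suc n) j) = (\<Sum>s<k. (1 - e) * e ^ s * (\<Sum>j<k - s. neg_binomial e n j))"
proof (induction k)
  case 0
  show ?case by simp
next
  case (Suc k)
  have "(\<Sum>s<Suc k. (1 - e) * e ^ s * (\<Sum>j<Suc k - s. neg_binomial e n j))
      = (\<Sum>s\<le>k. (1 - e) * e ^ s * ((\<Sum>j<k - s. neg_binomial e n j) + neg_binomial e n (k - s)))"
    unfolding lessThan_Suc_atMost by (intro sum.cong refl) (simp add: Suc_diff_le)
  also have "\<dots> = (\<Sum>s\<le>k. (1 - e) * e ^ s * (\<Sum>j<k - s. neg_binomial e n j))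
        + neg_binomial e (Suc n) k"
    by (simp add: distrib_left sum.distrib neg_binomial_convolution)
  also have "(\<Sum>s\<le>k. (1 - e) * e ^ s * (\<Sum>j<k - s. neg_binomial e n j))
      = (\<Sum>j<k. neg_binomial e (Suc n) j)"
    by (simp add: Suc.IH flip: lessThan_Suc_atMost)
  finally show ?case
    by (simp only: sum.lessThan_Suc[of "neg_binomial e (Suc n)"])
qed

lemma neg_binomial_tail_Suc:
  assumes "k \<le> r"
  shows "neg_binomial_tail e (Suc n) k = (\<Sum>s\<le>r. capped_geom e r s * neg_binomial_tail e n (k - s))"
proof -
  have "(\<Sum>s\<le>r. capped_geom e r s * neg_binomial_tail e n (k - s))
      = 1 - (\<Sum>s\<le>r. capped_geom e r s * (\<Sum>j<k - s. neg_binomial e n j))"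
    by (simp add: neg_binomial_tail_def right_diff_distrib sum_subtractf sum_capped_geom)
  also have "(\<Sum>s\<le>r. capped_geom e r s * (\<Sum>j<k - s. neg_binomial e n j))
      = (\<Sum>s<k. capped_geom e r s * (\<Sum>j<k - s. neg_binomial e n j))"
    using assms by (intro sum.mono_neutral_right) auto
  also have "\<dots> = (\<Sum>s<k. (1 - e) * e ^ s * (\<Sum>j<k - s. neg_binomial e n j))"
    using assms by (intro sum.cong) (auto simp: capped_geom_def)
  finally show ?thesis
    by (simp add: neg_binomial_tail_def neg_binomial_cdf_Suc)
qed

lemma neg_binomial_sums:
  assumes "n \<ge> 1" "0 \<le> e" "e < 1"
  shows "neg_binomial e n sums 1"
proof -
  have coeff: "(- real n gchoose j) * (- e) ^ j = real ((n + j - 1) choose j) * e ^ j" for j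
  proof -
    have "real n + real j - 1 = real (n + j - 1)"
      using assms(1) by simp
    then have "(- real n gchoose j) = (-1) ^ j * real ((n + j - 1) choose j)"
      using gbinomial_minus[of "real n" j] by (simp only: binomial_gbinomial)
    then have "(- real n gchoose j) * (- e) ^ j
        = ((-1) ^ j * (-1) ^ j) * (real ((n + j - 1) choose j) * e ^ j)"
      unfolding power_minus[of e] by (simp only: mult_ac)
    then show ?thesis
      by simp
  qed
  have "\<bar>- e\<bar> < 1"
    using assms by simp
  from gen_binomial_real[OF this, of "- real n"]
  have "(\<lambda>j. real ((n + j - 1) choose j) * e ^ j) sums (1 - e) powr (- real n)"
    by (simp only: coeff diff_conv_add_uminus)
  then have "(\<lambda>j. (1 - e) ^ n * (real ((n + j - 1) choose j) * e ^ j))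
      sums ((1 - e) ^ n * (1 - e) powr (- real n))"
    by (rule sums_mult)
  moreover have "(1 - e) ^ n * (1 - e) powr (- real n) = 1"
    using assms by (simp add: powr_minus powr_realpow)
  ultimately show ?thesis
    unfolding neg_binomial_def by (simp add: mult_ac)
qed

lemma neg_binomial_tail_eq_inc_beta:
  assumes "n \<ge> 1" "0 \<le> e" "e < 1"
  shows "neg_binomial_tail e n k = inc_beta e k n"
proof -
  have "(\<lambda>j. neg_binomial e n j - (if j \<in> {..<k} then neg_binomial e n j else 0))
      sums (1 - (\<Sum>j<k. neg_binomial e n j))"
    by (intro sums_diff neg_binomial_sums assms sums_If_finite_set) simp
  moreover have "(\<lambda>j. neg_binomial e n j - (if j \<in> {..<k} then neg_binomial e n j else 0))
      = (\<lambda>j. (1 - e) ^ n * (if k \<le> j then real ((n + j - 1) choose j) * e ^ j else 0))"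
      (is "_ = (\<lambda>j. _ * ?f j)")
    by (auto simp: neg_binomial_def)
  ultimately have sums: "(\<lambda>j. (1 - e) ^ n * ?f j) sums neg_binomial_tail e n k"
    by (simp add: neg_binomial_tail_def)
  have "(1 - e) ^ n \<noteq> 0"
    using assms by simp
  moreover have "summable (\<lambda>j. (1 - e) ^ n * ?f j)"
    using sums by (rule sums_summable)
  ultimately have "summable ?f"
    using assms(3) by (simp add: summable_cmult_iff)
  from sums have "neg_binomial_tail e n k = (\<Sum>j. (1 - e) ^ n * ?f j)"
    by (rule sums_unique)
  also have "\<dots> = (1 - e) ^ n * (\<Sum>j. ?f j)"
    using \<open>summable ?f\<close> by (rule suminf_mult)
  finally show ?thesis
    unfolding inc_beta_def .
qed

lemma prod_prime_powers_dvd_iff: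
  fixes P :: "nat set"
  assumes "finite P" "\<forall>p\<in>P. prime p"
  shows "int (\<Prod>p\<in>P. p ^ f p) dvd y \<longleftrightarrow> (\<forall>p\<in>P. int p ^ f p dvd y)"
  using assms
proof (induction P rule: finite_induct)
  case empty
  show ?case by simp
next
  case (insert q P)
  have "coprime (q ^ f q) (\<Prod>p\<in>P. p ^ f p)"
    using insert by (intro prod_coprime_right) (auto intro: primes_coprime)
  then have "coprime (int q ^ f q) (int (\<Prod>p\<in>P. p ^ f p))"
    by (metis coprime_int_iff of_nat_power)
  then have "int q ^ f q * int (\<Prod>p\<in>P. p ^ f p) dvd y
      \<longleftrightarrow> int q ^ f q dvd y \<and> int (\<Prod>p\<in>P. p ^ f p) dvd y"
    by (auto intro: divides_mult dvd_mult_left dvd_mult_right)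
  then show ?case
    using insert by simp
qed

lemma card_pairwise_dvd_diff_le:
  fixes T :: "nat set"
  assumes "T \<subseteq> {0..<m}" "M > 0" "\<forall>t\<in>T. \<forall>t'\<in>T. int M dvd int t - int t'"
  shows "real (card T) \<le> real m / real M + 1"
proof (cases "T = {}")
  case True
  then show ?thesis by simp
next
  case False
  have "finite T"
    using assms(1) finite_subset by blast
  define t0 where "t0 = Min T"
  have t0: "t0 \<in> T" "\<And>t. t \<in> T \<Longrightarrow> t0 \<le> t"
    using \<open>finite T\<close> False by (simp_all add: t0_def)
  define index where "index t = (t - t0) div M" for t
  have "M dvd t - t0" if "t \<in> T" for t
    using assms(3) that t0 by (metis of_nat_diff of_nat_dvd_iff)
  then have "t = t0 + M * index t" if "t \<in> T" for t
    using that t0(2) by (simp add: index_def)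
  then have "inj_on index T"
    by (metis inj_onI)
  moreover have "index ` T \<subseteq> {..(m - 1) div M}"
    using assms(1) by (auto simp: index_def intro!: div_le_mono)
  ultimately have "card T \<le> Suc ((m - 1) div M)"
    by (metis card_atMost card_image card_mono finite_atMost)
  then have "real (card T) \<le> real ((m - 1) div M) + 1"
    by simp
  also have "real ((m - 1) div M) \<le> real (m - 1) / real M"
    by (rule of_nat_div_le_of_nat)
  also have "\<dots> \<le> real m / real M"
    using assms(2) by (simp add: divide_right_mono)
  finally show ?thesis
    by simp
qed

lemma prime_power_dvd_solution_diff:
  fixes a b :: "'c \<Rightarrow> int" and t t0 :: int
  assumes "prime p"
    and sol: "\<forall>c\<in>C. int p ^ r dvd t * a c + b c" "\<forall>c\<in>C. int p ^ r dvd t0 * a c + b c"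
    and content: "\<And>s. s \<le> r \<Longrightarrow> \<forall>c\<in>C. int p ^ s dvd a c \<and> int p ^ s dvd b c \<Longrightarrow> s \<le> d"
  shows "int p ^ (r - d) dvd t - t0"
proof -
  define u where "u = t - t0"
  have au: "int p ^ r dvd a c * u" if "c \<in> C" for c
  proof -
    have "int p ^ r dvd (t * a c + b c) - (t0 * a c + b c)"
      using sol that by (blast intro: dvd_diff)
    then show ?thesis
      by (simp add: u_def algebra_simps)
  qed
  \<comment> \<open>If \<open>p^s\<close> divides \<open>u\<close> exactly, then \<open>p^(r - s)\<close> divides every \<open>a c\<close>, hence every \<open>b c\<close>.\<close>
  have "int p ^ s dvd u" if "s \<le> r - d" for s
    using that
  proof (induction s)
    case 0
    show ?case by simp
  next
    case (Suc s)
    then obtain u' where u': "u = int p ^ s * u'"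
      by (auto elim: dvdE)
    show ?case
    proof (rule ccontr)
      assume "\<not> int p ^ Suc s dvd u"
      then have "\<not> int p dvd u'"
        using u' by (auto simp: mult_dvd_mono)
      then have cop: "coprime (int p ^ (r - s)) u'"
        using \<open>prime p\<close> by (simp add: prime_imp_coprime)
      have "int p ^ (r - s) dvd a c \<and> int p ^ (r - s) dvd b c" if "c \<in> C" for c
      proof
        have "int p ^ s * int p ^ (r - s) dvd int p ^ s * (a c * u')"
          using au[OF that] Suc.prems unfolding u' by (simp add: mult_ac flip: power_add)
        then show ad: "int p ^ (r - s) dvd a c"
          using \<open>prime p\<close> cop by (simp add: coprime_dvd_mult_left_iff prime_gt_0_nat)
        have "int p ^ (r - s) dvd t0 * a c + b c"
          using sol(2) that le_imp_power_dvd[of "r - s" r] by (meson diff_le_self dvd_trans)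
        then show "int p ^ (r - s) dvd b c"
          using ad by (simp add: dvd_add_right_iff)
      qed
      then have "r - s \<le> d"
        using content by simp
      with Suc.prems show False
        by simp
    qed
  qed
  then show ?thesis
    by (simp add: u_def)
qed

lemma card_line_solutions_le:
  fixes a b :: "'c \<Rightarrow> int" and P :: "nat set"
  assumes "finite P" "\<forall>p\<in>P. prime p"
  shows "real (card {t \<in> {0..<m}. \<forall>c\<in>C. int (\<Prod>p\<in>P. p ^ r p) dvd int t * a c + b c})
    \<le> 1 + real m * (\<Prod>p\<in>P. \<Sum>s\<le>r p. capped_geom (1 / real p) (r p) s *
          (if \<forall>c\<in>C. int p ^ (r p - s) dvd a c \<and> int p ^ (r p - s) dvd b c then 1 else 0))"
    (is "real (card ?T) \<le> 1 + real m * (\<Prod>p\<in>P. \<Sum>s\<le>r p. _ * (if ?Q p (r p - s) then 1 else 0))")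
proof -
  define d where "d p = Max {s. s \<le> r p \<and> ?Q p s}" for p
  have d: "d p \<le> r p" "?Q p (d p)" "\<And>s. s \<le> r p \<Longrightarrow> ?Q p s \<Longrightarrow> s \<le> d p" for p
  proof -
    have fin: "finite {s. s \<le> r p \<and> ?Q p s}"
      by simp
    moreover have "0 \<in> {s. s \<le> r p \<and> ?Q p s}"
      by simp
    ultimately have "d p \<in> {s. s \<le> r p \<and> ?Q p s}"
      unfolding d_def by (intro Max_in) auto
    then show "d p \<le> r p" "?Q p (d p)"
      by auto
    show "s \<le> d p" if "s \<le> r p" "?Q p s" for s
      unfolding d_def using fin that by (intro Max_ge) auto
  qed
  have Q_iff: "?Q p s \<longleftrightarrow> s \<le> d p" if "s \<le> r p" for p s
    using d(2)[of p] d(3)[OF that] by (meson dvd_trans le_imp_power_dvd)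
  define M where "M = (\<Prod>p\<in>P. p ^ (r p - d p))"
  have "int M dvd int t - int t'" if "t \<in> ?T" "t' \<in> ?T" for t t'
    unfolding M_def prod_prime_powers_dvd_iff[OF assms]
  proof
    fix p assume "p \<in> P"
    then have "\<forall>c\<in>C. int p ^ r p dvd int t * a c + b c" "\<forall>c\<in>C. int p ^ r p dvd int t' * a c + b c"
      using that assms prod_prime_powers_dvd_iff[OF assms] by auto
    then show "int p ^ (r p - d p) dvd int t - int t'"
      using \<open>p \<in> P\<close> assms(2) d(3) by (intro prime_power_dvd_solution_diff) auto
  qed
  moreover have "M > 0"
    using assms(2) by (simp add: M_def prime_gt_0_nat prod_pos)
  ultimately have "real (card ?T) \<le> real m / real M + 1"
    by (intro card_pairwise_dvd_diff_le) auto
  also have "real m / real M = real m * (\<Prod>p\<in>P. (1 / real p) ^ (r p - d p))"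
    by (simp add: M_def prod_dividef power_one_over)
  also have "(\<Prod>p\<in>P. (1 / real p) ^ (r p - d p))
      = (\<Prod>p\<in>P. \<Sum>s\<le>r p. capped_geom (1 / real p) (r p) s * (if ?Q p (r p - s) then 1 else 0))"
    by (intro prod.cong refl) (simp add: Q_iff sum_capped_geom_indicator d(1) cong: if_cong)
  finally show ?thesis
    by simp
qed

lemma prod_sum_indicator_PiE:
  fixes w :: "'a \<Rightarrow> nat \<Rightarrow> real"
  assumes "finite P"
  shows "(\<Prod>p\<in>P. \<Sum>s\<le>r p. w p s * (if Q p s then 1 else 0))
    = (\<Sum>z\<in>PiE P (\<lambda>p. {..r p}). (\<Prod>p\<in>P. w p (z p)) * (if \<forall>p\<in>P. Q p (z p) then 1 else 0))"
proof -
  have "(\<Prod>p\<in>P. (if Q p (z p) then 1 else 0 :: real)) = (if \<forall>p\<in>P. Q p (z p) then 1 else 0)" for z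
    using assms by (induction P rule: finite_induct) auto
  then show ?thesis
    using assms by (simp add: prod_sum_PiE prod.distrib)
qed

lemma sum_PiE_capped_geom_weights:
  assumes "finite P" "\<forall>p\<in>P. k p \<le> r p"
  shows "(\<Sum>z\<in>PiE P (\<lambda>p. {..r p}). (\<Prod>p\<in>P. capped_geom (e p) (r p) (z p))
            * (x + (\<Prod>p\<in>P. neg_binomial_tail (e p) n (k p - z p))))
    = x + (\<Prod>p\<in>P. neg_binomial_tail (e p) (Suc n) (k p))"
proof -
  have "(\<Sum>z\<in>PiE P (\<lambda>p. {..r p}). \<Prod>p\<in>P. capped_geom (e p) (r p) (z p))
      = (\<Prod>p\<in>P. \<Sum>s\<le>r p. capped_geom (e p) (r p) s)"
    using assms(1) by (simp add: prod_sum_PiE)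
  then have "(\<Sum>z\<in>PiE P (\<lambda>p. {..r p}). \<Prod>p\<in>P. capped_geom (e p) (r p) (z p)) = 1"
    by (simp add: sum_capped_geom)
  moreover have "(\<Sum>z\<in>PiE P (\<lambda>p. {..r p}). (\<Prod>p\<in>P. capped_geom (e p) (r p) (z p))
        * (\<Prod>p\<in>P. neg_binomial_tail (e p) n (k p - z p)))
      = (\<Prod>p\<in>P. \<Sum>s\<le>r p. capped_geom (e p) (r p) s * neg_binomial_tail (e p) n (k p - s))"
    using assms(1) by (simp add: prod_sum_PiE prod.distrib)
  moreover have "\<dots> = (\<Prod>p\<in>P. neg_binomial_tail (e p) (Suc n) (k p))"
    using assms(2) by (intro prod.cong refl) (metis neg_binomial_tail_Suc)
  ultimately show ?thesis
    by (simp add: distrib_left sum.distrib flip: sum_distrib_right)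
qed

definition mlin_lead :: "nat \<Rightarrow> (nat set \<Rightarrow> int) \<Rightarrow> nat set \<Rightarrow> int" where
  "mlin_lead n c S = c (insert n S)"

definition coeffs_dvd :: "nat \<Rightarrow> (nat set \<Rightarrow> int) set \<Rightarrow> int \<Rightarrow> bool" where
  "coeffs_dvd n F q \<longleftrightarrow> (\<forall>c\<in>F. \<forall>S\<in>Pow {..<n}. q dvd c S)"

definition zeros_mod :: "nat \<Rightarrow> nat \<Rightarrow> int \<Rightarrow> (nat set \<Rightarrow> int) set \<Rightarrow> (nat \<Rightarrow> nat) set" where
  "zeros_mod n m q F = {x \<in> PiE {..<n} (\<lambda>_. {0..<m}). \<forall>c\<in>F. q dvd mlin_eval n c (\<lambda>i. int (x i))}"

lemma mlin_eval_cong: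
  assumes "\<And>i. i < n \<Longrightarrow> y i = y' i"
  shows "mlin_eval n c y = mlin_eval n c y'"
  unfolding mlin_eval_def
proof (intro sum.cong refl)
  fix S assume "S \<in> Pow {..<n}"
  then show "c S * prod y S = c S * prod y' S"
    using assms by (auto intro!: prod.cong)
qed

lemma mlin_eval_Suc:
  "mlin_eval (Suc n) c y = y n * mlin_eval n (mlin_lead n c) y + mlin_eval n c y"
proof -
  have Pow: "Pow {..<Suc n} = Pow {..<n} \<union> insert n ` Pow {..<n}"
    by (simp add: lessThan_Suc Pow_insert)
  have "inj_on (insert n) (Pow {..<n})"
    by (rule inj_onI) (metis PowD insert_ident lessThan_iff order_less_irrefl subset_iff)
  moreover have "c (insert n S) * prod y (insert n S) = y n * (mlin_lead n c S * prod y S)"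
    if "S \<in> Pow {..<n}" for S
  proof -
    have "finite S" "n \<notin> S"
      using that finite_subset[of S "{..<n}"] by auto
    then show ?thesis
      by (simp add: mlin_lead_def)
  qed
  ultimately have "(\<Sum>S\<in>insert n ` Pow {..<n}. c S * prod y S)
      = y n * mlin_eval n (mlin_lead n c) y"
    by (simp add: sum.reindex mlin_eval_def sum_distrib_left)
  moreover have "mlin_eval (Suc n) c y
      = (\<Sum>S\<in>Pow {..<n}. c S * prod y S) + (\<Sum>S\<in>insert n ` Pow {..<n}. c S * prod y S)"
    unfolding mlin_eval_def Pow by (rule sum.union_disjoint) auto
  ultimately show ?thesis
    by (simp add: mlin_eval_def)
qed

lemma coeffs_dvd_SucI:
  assumes "coeffs_dvd n (mlin_lead n ` F \<union> F) q"
  shows "coeffs_dvd (Suc n) F q"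
  unfolding coeffs_dvd_def
proof (intro ballI)
  fix c S assume "c \<in> F" "S \<in> Pow {..<Suc n}"
  then show "q dvd c S"
  proof (cases "n \<in> S")
    case True
    then have "S - {n} \<in> Pow {..<n}" and "S = insert n (S - {n})"
      using \<open>S \<in> Pow {..<Suc n}\<close> by auto
    then show ?thesis
      using assms \<open>c \<in> F\<close> unfolding coeffs_dvd_def mlin_lead_def by (metis Un_iff image_eqI)
  next
    case False
    then have "S \<in> Pow {..<n}"
      using \<open>S \<in> Pow {..<Suc n}\<close> by (auto simp: less_Suc_eq)
    then show ?thesis
      using assms \<open>c \<in> F\<close> unfolding coeffs_dvd_def by blast
  qed
qed

lemma card_filter_PiE_Suc:
  "card {x \<in> PiE {..<Suc n} (\<lambda>_. A). R x} = (\<Sum>g\<in>PiE {..<n} (\<lambda>_. A). card {y \<in> A. R (g(n := y))})"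
  if "finite A"
proof -
  define X where "X = PiE {..<n} (\<lambda>_. A)"
  define extend where "extend = (\<lambda>(y, g). g(n := y) :: nat \<Rightarrow> 'a)"
  have inj: "inj_on extend (A \<times> X)"
    using inj_combinator[of n "{..<n}" "\<lambda>_. A"] by (simp add: extend_def X_def)
  have "{x \<in> PiE {..<Suc n} (\<lambda>_. A). R x} = extend ` {z \<in> A \<times> X. R (extend z)}"
    by (auto simp: extend_def X_def lessThan_Suc PiE_insert_eq)
  also have "card \<dots> = card {z \<in> A \<times> X. R (extend z)}"
    using inj by (intro card_image) (auto intro: inj_on_subset)
  also have "{z \<in> A \<times> X. R (extend z)} = prod.swap ` (SIGMA g:X. {y \<in> A. R (g(n := y))})"
    by (auto simp: extend_def)
  also have "card \<dots> = card (SIGMA g:X. {y \<in> A. R (g(n := y))})"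
    by (intro card_image) auto
  also have "\<dots> = (\<Sum>g\<in>X. card {y \<in> A. R (g(n := y))})"
    using that by (intro card_SigmaI) (auto simp: X_def finite_PiE)
  finally show ?thesis
    by (simp add: X_def)
qed

lemma card_zeros_mod_Suc:
  "card (zeros_mod (Suc n) m q F) = (\<Sum>g\<in>PiE {..<n} (\<lambda>_. {0..<m}).
     card {y \<in> {0..<m}. \<forall>c\<in>F. q dvd int y * mlin_eval n (mlin_lead n c) (\<lambda>i. int (g i))
                                      + mlin_eval n c (\<lambda>i. int (g i))})"
proof -
  have "mlin_eval n c' (\<lambda>i. int ((g(n := y)) i)) = mlin_eval n c' (\<lambda>i. int (g i))" for c' g y
    by (rule mlin_eval_cong) simp
  then show ?thesis
    unfolding zeros_mod_def by (simp add: card_filter_PiE_Suc mlin_eval_Suc)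
qed

lemma mlin_eval_0: "mlin_eval 0 c y = c {}"
  by (simp add: mlin_eval_def)

lemma zeros_mod_subset_grid: "zeros_mod n m q F \<subseteq> PiE {..<n} (\<lambda>_. {0..<m})"
  by (auto simp: zeros_mod_def)

lemma card_zeros_mod_0_le:
  assumes "finite P" "\<forall>p\<in>P. prime p"
    and "\<forall>p\<in>P. \<forall>j. coeffs_dvd 0 F (int p ^ j) \<longrightarrow> k p \<le> r p - j"
  shows "real (card (zeros_mod 0 m (int (\<Prod>p\<in>P. p ^ r p)) F))
    \<le> (\<Prod>p\<in>P. neg_binomial_tail (1 / real p) 0 (k p))"
proof (cases "zeros_mod 0 m (int (\<Prod>p\<in>P. p ^ r p)) F = {}")
  case True
  have "0 \<le> (\<Prod>p\<in>P. neg_binomial_tail (1 / real p) 0 (k p))"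
    by (intro prod_nonneg) (simp add: neg_binomial_tail_def neg_binomial_0)
  with True show ?thesis
    by simp
next
  case False
  then have "\<forall>c\<in>F. int (\<Prod>p\<in>P. p ^ r p) dvd c {}"
    by (auto simp: zeros_mod_def mlin_eval_0)
  then have "coeffs_dvd 0 F (int p ^ r p)" if "p \<in> P" for p
    using that prod_prime_powers_dvd_iff[OF assms(1,2)] by (auto simp: coeffs_dvd_def)
  then have "k p = 0" if "p \<in> P" for p
    using assms(3) that by fastforce
  moreover have "card (zeros_mod 0 m (int (\<Prod>p\<in>P. p ^ r p)) F) \<le> card (PiE {..<0::nat} (\<lambda>_. {0..<m}))"
    by (intro card_mono finite_PiE zeros_mod_subset_grid) auto
  then have "card (zeros_mod 0 m (int (\<Prod>p\<in>P. p ^ r p)) F) \<le> 1"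
    by (simp add: card_PiE)
  ultimately show ?thesis
    by simp
qed

lemma card_fibre_le:
  fixes P :: "nat set" and g :: "nat \<Rightarrow> int"
  assumes "finite P" "\<forall>p\<in>P. prime p"
  shows "real (card {y \<in> {0..<m}. \<forall>c\<in>F. int (\<Prod>p\<in>P. p ^ r p) dvd
             int y * mlin_eval n (mlin_lead n c) g + mlin_eval n c g})
    \<le> 1 + real m * (\<Sum>z\<in>PiE P (\<lambda>p. {..r p}). (\<Prod>p\<in>P. capped_geom (1 / real p) (r p) (z p)) *
          (if \<forall>c\<in>mlin_lead n ` F \<union> F. int (\<Prod>p\<in>P. p ^ (r p - z p)) dvd mlin_eval n c g
           then 1 else 0))"
proof -
  have "(\<forall>p\<in>P. \<forall>c\<in>F. int p ^ (r p - z p) dvd mlin_eval n (mlin_lead n c) g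
                     \<and> int p ^ (r p - z p) dvd mlin_eval n c g)
      \<longleftrightarrow> (\<forall>c\<in>mlin_lead n ` F \<union> F. int (\<Prod>p\<in>P. p ^ (r p - z p)) dvd mlin_eval n c g)" for z
    unfolding prod_prime_powers_dvd_iff[OF assms] by blast
  then show ?thesis
    using card_line_solutions_le[OF assms, where C = F and m = m and r = r
        and a = "\<lambda>c. mlin_eval n (mlin_lead n c) g" and b = "\<lambda>c. mlin_eval n c g"]
    by (simp add: prod_sum_indicator_PiE[OF assms(1)])
qed

lemma card_zeros_mod_Suc_le:
  fixes P :: "nat set"
  assumes "finite P" "\<forall>p\<in>P. prime p"
  shows "real (card (zeros_mod (Suc n) m (int (\<Prod>p\<in>P. p ^ r p)) F))
    \<le> real m ^ n + real m * (\<Sum>z\<in>PiE P (\<lambda>p. {..r p}). (\<Prod>p\<in>P. capped_geom (1 / real p) (r p) (z p))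
          * real (card (zeros_mod n m (int (\<Prod>p\<in>P. p ^ (r p - z p))) (mlin_lead n ` F \<union> F))))"
proof -
  define X where "X = PiE {..<n} (\<lambda>_::nat. {0..<m})"
  define Z where "Z = PiE P (\<lambda>p. {..r p})"
  define w where "w z = (\<Prod>p\<in>P. capped_geom (1 / real p) (r p) (z p))" for z
  define B where "B z = zeros_mod n m (int (\<Prod>p\<in>P. p ^ (r p - z p))) (mlin_lead n ` F \<union> F)" for z
  have "x \<in> B z \<longleftrightarrow> (\<forall>c\<in>mlin_lead n ` F \<union> F.
      int (\<Prod>p\<in>P. p ^ (r p - z p)) dvd mlin_eval n c (\<lambda>i. int (x i)))" if "x \<in> X" for x z
    using that by (simp add: B_def X_def zeros_mod_def)
  then have "real (card (zeros_mod (Suc n) m (int (\<Prod>p\<in>P. p ^ r p)) F))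
      \<le> (\<Sum>g\<in>X. 1 + real m * (\<Sum>z\<in>Z. w z * (if g \<in> B z then 1 else 0)))"
    unfolding card_zeros_mod_Suc of_nat_sum X_def
    using card_fibre_le[OF assms] by (intro sum_mono) (simp add: X_def Z_def w_def)
  also have "\<dots> = real (card X) + real m * (\<Sum>z\<in>Z. w z * (\<Sum>g\<in>X. if g \<in> B z then 1 else 0))"
    by (simp add: sum.distrib sum_distrib_left sum_distrib_right sum.swap[of _ X Z] mult_ac)
  also have "\<dots> = real m ^ n + real m * (\<Sum>z\<in>Z. w z * real (card (B z)))"
    using zeros_mod_subset_grid[of n m _ "mlin_lead n ` F \<union> F"]
    by (simp add: X_def B_def card_PiE sum.If_cases Int_absorb1 finite_PiE)
  finally show ?thesis
    by (simp add: Z_def w_def B_def)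
qed

lemma prime_reciprocal_bounds:
  assumes "prime p"
  shows "0 \<le> 1 / real p" "1 / real p < 1"
  using prime_gt_1_nat[OF assms] by simp_all

text \<open>The hypothesis says that the \<open>p\<close>-content of the family \<open>F\<close> is at most \<open>r p - k p\<close>;
  for a single polynomial co-prime to the modulus one may take \<open>k = r\<close>.\<close>
lemma card_zeros_mod_le:
  fixes P :: "nat set" and r k :: "nat \<Rightarrow> nat"
  assumes "finite P" "\<forall>p\<in>P. prime p" "m > 0"
    and "\<forall>p\<in>P. \<forall>j. coeffs_dvd n F (int p ^ j) \<longrightarrow> k p \<le> r p - j"
  shows "real (card (zeros_mod n m (int (\<Prod>p\<in>P. p ^ r p)) F))
    \<le> real m ^ n * (real n / real m + (\<Prod>p\<in>P. neg_binomial_tail (1 / real p) n (k p)))"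
  using assms(4)
proof (induction n arbitrary: F r k)
  case 0
  then show ?case
    using card_zeros_mod_0_le[OF assms(1,2)] by simp
next
  case (Suc n)
  define w where "w z = (\<Prod>p\<in>P. capped_geom (1 / real p) (r p) (z p))" for z
  define B where "B z = zeros_mod n m (int (\<Prod>p\<in>P. p ^ (r p - z p))) (mlin_lead n ` F \<union> F)" for z
  have "0 \<le> 1 / real p" "1 / real p \<le> 1" if "p \<in> P" for p
    using assms(2) that prime_reciprocal_bounds less_imp_le by meson+
  then have w_nonneg: "w z \<ge> 0" for z
    unfolding w_def by (intro prod_nonneg capped_geom_nonneg)
  have "real (card (B z)) \<le> real m ^ n * (real n / real m
      + (\<Prod>p\<in>P. neg_binomial_tail (1 / real p) n (k p - z p)))" for z
    unfolding B_def
  proof (rule Suc.IH, intro ballI allI impI)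
    fix p j assume "p \<in> P" "coeffs_dvd n (mlin_lead n ` F \<union> F) (int p ^ j)"
    then show "k p - z p \<le> r p - z p - j"
      using Suc.prems coeffs_dvd_SucI by fastforce
  qed
  then have IH: "w z * real (card (B z)) \<le> w z * (real m ^ n * (real n / real m
      + (\<Prod>p\<in>P. neg_binomial_tail (1 / real p) n (k p - z p))))" for z
    using w_nonneg by (rule mult_left_mono)
  have "\<forall>p\<in>P. k p \<le> r p"
    using Suc.prems[rule_format, of _ 0] by (simp add: coeffs_dvd_def)
  then have weights: "(\<Sum>z\<in>PiE P (\<lambda>p. {..r p}). w z * (real n / real m
      + (\<Prod>p\<in>P. neg_binomial_tail (1 / real p) n (k p - z p))))
    = real n / real m + (\<Prod>p\<in>P. neg_binomial_tail (1 / real p) (Suc n) (k p))"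
    unfolding w_def by (rule sum_PiE_capped_geom_weights[OF assms(1), where e = "\<lambda>p. 1 / real p"])
  have "real (card (zeros_mod (Suc n) m (int (\<Prod>p\<in>P. p ^ r p)) F))
      \<le> real m ^ n + real m * (\<Sum>z\<in>PiE P (\<lambda>p. {..r p}). w z * real (card (B z)))"
    unfolding w_def B_def by (rule card_zeros_mod_Suc_le[OF assms(1,2)])
  also have "\<dots> \<le> real m ^ n + real m * (\<Sum>z\<in>PiE P (\<lambda>p. {..r p}). w z * (real m ^ n
      * (real n / real m + (\<Prod>p\<in>P. neg_binomial_tail (1 / real p) n (k p - z p)))))"
    using IH by (intro add_left_mono mult_left_mono[OF sum_mono]) auto
  also have "\<dots> = real m ^ n + real m * (real m ^ n * (real n / real m
      + (\<Prod>p\<in>P. neg_binomial_tail (1 / real p) (Suc n) (k p))))"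
    by (simp add: sum_distrib_left mult_ac flip: weights)
  also have "\<dots> = real m ^ Suc n * (real (Suc n) / real m
      + (\<Prod>p\<in>P. neg_binomial_tail (1 / real p) (Suc n) (k p)))"
    using assms(3) by (simp add: field_simps)
  finally show ?case .
qed

lemma mlin_coprime_coeffs_dvd_prime_power:
  assumes "mlin_coprime n c (int N)" "prime p" "p dvd N" "coeffs_dvd n {c} (int p ^ j)"
  shows "j = 0"
proof (rule ccontr)
  assume "j \<noteq> 0"
  then have "\<forall>S\<in>Pow {..<n}. int p dvd c S"
    using assms(4) by (auto simp: coeffs_dvd_def intro: dvd_trans[OF dvd_power])
  with assms(3) have "int p dvd Gcd (insert (int N) (c ` Pow {..<n}))"
    by (intro Gcd_greatest) auto
  with assms(1,2) show False
    by (simp add: mlin_coprime_def)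
qed

theorem theorem1:
  fixes N :: nat and \<mu> m :: nat and c :: "nat set \<Rightarrow> int"
  assumes "N > 0" and "\<mu> \<ge> 1" and "m > 1"
    and "mlin_coprime \<mu> c (int N)"
  shows "real (card {x \<in> PiE {..<\<mu>} (\<lambda>_. {0..<m}). int N dvd mlin_eval \<mu> c (\<lambda>i. int (x i))})
           / real m ^ \<mu>
         \<le> real \<mu> / real m
           + (\<Prod>p\<in>prime_factors N. inc_beta (1 / real p) (multiplicity p N) \<mu>)"
proof -
  define r where "r p = multiplicity p N" for p
  have N: "N = (\<Prod>p\<in>prime_factors N. p ^ r p)"
    using prod_prime_factors[of N] assms(1) by (simp add: r_def)
  have "\<forall>p\<in>prime_factors N. \<forall>j. coeffs_dvd \<mu> {c} (int p ^ j) \<longrightarrow> r p \<le> r p - j"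
    using mlin_coprime_coeffs_dvd_prime_power[OF assms(4)]
    by (metis diff_zero in_prime_factors_imp_dvd in_prime_factors_imp_prime order.refl)
  then have "real (card (zeros_mod \<mu> m (int (\<Prod>p\<in>prime_factors N. p ^ r p)) {c}))
      \<le> real m ^ \<mu> * (real \<mu> / real m + (\<Prod>p\<in>prime_factors N. neg_binomial_tail (1 / real p) \<mu> (r p)))"
    using assms(3) by (intro card_zeros_mod_le) auto
  also note N[symmetric]
  also have "(\<Prod>p\<in>prime_factors N. neg_binomial_tail (1 / real p) \<mu> (r p))
      = (\<Prod>p\<in>prime_factors N. inc_beta (1 / real p) (multiplicity p N) \<mu>)"
  proof (intro prod.cong refl)
    fix p assume "p \<in> prime_factors N"
    then have "prime p"
      by auto
    then show "neg_binomial_tail (1 / real p) \<mu> (r p) = inc_beta (1 / real p) (multiplicity p N) \<mu>"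
      unfolding r_def using assms(2) prime_reciprocal_bounds by (intro neg_binomial_tail_eq_inc_beta)
  qed
  finally show ?thesis
    using assms(3) by (simp add: zeros_mod_def pos_divide_le_eq mult.commute)
qed

end
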